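(* Let $\eta\in C^2(\mathbb T^N,(0,\infty))$, $0\le a\le b$, $L\ge0$, $i\in[1,N]$ and $k\ne i$. The measure with density $\eta$ belongs to $\mathcal M^{(i,k)}_{a,b,L}$ if and only if (i) $\eta(\cdot;\hat{\boldsymbol x}_i)\in\mathcal V_a$ for all $\hat{\boldsymbol x}_i\in\mathbb T^{N-1}$, and (ii) $A^{(i,k)}_{\eta,b}(\hat{\boldsymbol x}_i)-B^{(i,k)}_{\eta,b}(\hat{\boldsymbol x}_i)\le L$ for every $\hat{\boldsymbol x}_i\in\mathbb T^{N-1}$, where $$A^{(i,k)}_{\eta,b}(\hat{\boldsymbol x}_i):=\sup_{x\in\mathbb T}\max\Big\{\frac{\partial_k\eta}{\eta},\ \frac{b\partial_k\eta-\partial_k\partial_i\eta}{b\eta-\partial_i\eta},\ \frac{b\partial_k\eta+\partial_k\partial_i\eta}{b\eta+\partial_i\eta}\Big\}(x;\hat{\boldsymbol x}_i),$$ and $B^{(i,k)}_{\eta,b}(\hat{\boldsymbol x}_i)$ is defined by the same expression with $\sup_x\max$ replaced by $\inf_x\min$.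
   Context: $\mathbb T=\mathbb R/\mathbb Z$ with torus distance; $\boldsymbol x=(x_i;\hat{\boldsymbol x}_i)$ with $\hat{\boldsymbol x}_i\in\mathbb T^{N-1}$ the remaining coordinates. $\mathcal V_a:=\{\psi\in C^2(\mathbb T,(0,\infty)):|\frac d{dx}\log\psi|<a\}$; $\beta_a(\psi_1,\psi_2):=\inf\{t>0:t\psi_1-\psi_2\in\mathcal V_a\}$, $\theta_a(\psi_1,\psi_2):=\log\beta_a(\psi_1,\psi_2)+\log\beta_a(\psi_2,\psi_1)$. For a measure with density $\rho\in C^2(\mathbb T^N,(0,\infty))$, $\rho_{\hat{\boldsymbol x}_i}(x):=\rho(x;\hat{\boldsymbol x}_i)/\int\rho(s;\hat{\boldsymbol x}_i)ds$; it belongs to $\mathcal M^{(i,k)}_{a,b,L}$ iff $\rho_{\hat{\boldsymbol x}_i}\in\mathcal V_a$ for all $\hat{\boldsymbol x}_i$ and $\theta_b(\rho_{\hat{\boldsymbol x}_i},\rho_{\hat{\boldsymbol x}'_i})\le L|x_k-x'_k|$ whenever $\hat{\boldsymbol x}_i,\hat{\boldsymbol x}'_i$ differ only in their $k$-th coordinates $x_k,x'_k$. *)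

theory Defs
  imports "HOL-Analysis.Analysis"
begin

text \<open>The torus T = R/Z is represented by 1-periodic functions on R; T^N by functions on
  real^'n that are 1-periodic in every coordinate.\<close>

definition torus_dist :: "real \<Rightarrow> real \<Rightarrow> real" where
  "torus_dist u v = \<bar>(u - v) - of_int (round (u - v))\<bar>"

text \<open>Replace the j-th coordinate of x by t: the point (t; x-hat_j).\<close>
definition upd :: "real^'n \<Rightarrow> 'n \<Rightarrow> real \<Rightarrow> real^'n" where
  "upd x j t = (\<chi> l. if l = j then t else x $ l)"

definition sect :: "(real^'n \<Rightarrow> real) \<Rightarrow> real^'n \<Rightarrow> 'n \<Rightarrow> real \<Rightarrow> real" where
  "sect f x j = (\<lambda>t. f (upd x j t))"

definition partial :: "'n \<Rightarrow> (real^'n \<Rightarrow> real) \<Rightarrow> real^'n \<Rightarrow> real" where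
  "partial j f x = deriv (sect f x j) (x $ j)"

definition periodic1 :: "(real \<Rightarrow> real) \<Rightarrow> bool" where
  "periodic1 \<psi> \<longleftrightarrow> (\<forall>x. \<psi> (x + 1) = \<psi> x)"

definition periodicN :: "(real^'n \<Rightarrow> real) \<Rightarrow> bool" where
  "periodicN f \<longleftrightarrow> (\<forall>x j. f (upd x j (x $ j + 1)) = f x)"

definition C2_1 :: "(real \<Rightarrow> real) \<Rightarrow> bool" where
  "C2_1 \<psi> \<longleftrightarrow> (\<forall>x. \<psi> differentiable at x) \<and> (\<forall>x. deriv \<psi> differentiable at x)
     \<and> continuous_on UNIV (deriv (deriv \<psi>))"

definition C2_N :: "(real^'n \<Rightarrow> real) \<Rightarrow> bool" where
  "C2_N f \<longleftrightarrow> continuous_on UNIV f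
     \<and> (\<forall>j x. sect f x j differentiable at (x $ j))
     \<and> (\<forall>j. continuous_on UNIV (partial j f))
     \<and> (\<forall>j l x. sect (partial j f) x l differentiable at (x $ l))
     \<and> (\<forall>j l. continuous_on UNIV (partial l (partial j f)))"

definition C2_T_pos :: "(real \<Rightarrow> real) \<Rightarrow> bool" where
  "C2_T_pos \<psi> \<longleftrightarrow> periodic1 \<psi> \<and> C2_1 \<psi> \<and> (\<forall>x. \<psi> x > 0)"

definition C2_TN_pos :: "(real^'n \<Rightarrow> real) \<Rightarrow> bool" where
  "C2_TN_pos f \<longleftrightarrow> periodicN f \<and> C2_N f \<and> (\<forall>x. f x > 0)"

definition V :: "real \<Rightarrow> (real \<Rightarrow> real) set" where
  "V a = {\<psi>. C2_T_pos \<psi> \<and> (\<forall>x. \<bar>deriv (\<lambda>y. ln (\<psi> y)) x\<bar> < a)}"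

text \<open>beta_a, with the convention inf {} = +infinity.\<close>
definition beta :: "real \<Rightarrow> (real \<Rightarrow> real) \<Rightarrow> (real \<Rightarrow> real) \<Rightarrow> ereal" where
  "beta a \<psi>1 \<psi>2 = Inf (ereal ` {t. t > 0 \<and> (\<lambda>x. t * \<psi>1 x - \<psi>2 x) \<in> V a})"

definition theta :: "real \<Rightarrow> (real \<Rightarrow> real) \<Rightarrow> (real \<Rightarrow> real) \<Rightarrow> ereal" where
  "theta a \<psi>1 \<psi>2 =
     (if beta a \<psi>1 \<psi>2 = \<infinity> \<or> beta a \<psi>2 \<psi>1 = \<infinity> then \<infinity>
      else ereal (ln (real_of_ereal (beta a \<psi>1 \<psi>2)) + ln (real_of_ereal (beta a \<psi>2 \<psi>1))))"

text \<open>Normalized conditional density rho_{x-hat_i}; the i-th coordinate of y is ignored.\<close>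
definition cond_density :: "(real^'n \<Rightarrow> real) \<Rightarrow> 'n \<Rightarrow> real^'n \<Rightarrow> real \<Rightarrow> real" where
  "cond_density \<rho> i y = (\<lambda>x. \<rho> (upd y i x) / integral {0..1} (\<lambda>s. \<rho> (upd y i s)))"

definition in_M :: "'n \<Rightarrow> 'n \<Rightarrow> real \<Rightarrow> real \<Rightarrow> real \<Rightarrow> (real^'n \<Rightarrow> real) \<Rightarrow> bool" where
  "in_M i k a b L \<rho> \<longleftrightarrow> C2_TN_pos \<rho>
     \<and> (\<forall>y. cond_density \<rho> i y \<in> V a)
     \<and> (\<forall>y t. theta b (cond_density \<rho> i y) (cond_density \<rho> i (upd y k t))
                \<le> ereal (L * torus_dist (y $ k) t))"

definition ratios :: "'n \<Rightarrow> 'n \<Rightarrow> real \<Rightarrow> (real^'n \<Rightarrow> real) \<Rightarrow> real^'n \<Rightarrow> real list" where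
  "ratios i k b \<eta> p =
     [partial k \<eta> p / \<eta> p,
      (b * partial k \<eta> p - partial k (partial i \<eta>) p) / (b * \<eta> p - partial i \<eta> p),
      (b * partial k \<eta> p + partial k (partial i \<eta>) p) / (b * \<eta> p + partial i \<eta> p)]"

definition A_fun :: "'n \<Rightarrow> 'n \<Rightarrow> (real^'n \<Rightarrow> real) \<Rightarrow> real \<Rightarrow> real^'n \<Rightarrow> real" where
  "A_fun i k \<eta> b y = (SUP x\<in>UNIV. Max (set (ratios i k b \<eta> (upd y i x))))"

definition B_fun :: "'n \<Rightarrow> 'n \<Rightarrow> (real^'n \<Rightarrow> real) \<Rightarrow> real \<Rightarrow> real^'n \<Rightarrow> real" where
  "B_fun i k \<eta> b y = (INF x\<in>UNIV. Min (set (ratios i k b \<eta> (upd y i x))))"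

end

theory Submission
  imports Defs "HOL-Library.Periodic_Fun"
begin

text \<open>The cone \<open>V\<^sub>b\<close> is cut out by the positivity of the three linear forms \<open>\<psi>\<close>,
  \<open>b\<psi> - \<psi>'\<close>, \<open>b\<psi> + \<psi>'\<close>, so \<open>t\<psi>\<^sub>1 - \<psi>\<^sub>2 \<in> V\<^sub>b\<close> iff every form of \<open>\<psi>\<^sub>2\<close> lies below \<open>t\<close>
  times the same form of \<open>\<psi>\<^sub>1\<close>. Hence \<open>\<beta>\<^sub>b(\<psi>\<^sub>1,\<psi>\<^sub>2)\<close> is the supremum of the ratios of
  corresponding forms, and \<open>\<theta>\<^sub>b(\<psi>\<^sub>1,\<psi>\<^sub>2) \<le> T\<close> says that the log ratio of one form at \<open>x\<^sub>1\<close>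
  plus the reciprocal log ratio of another form at \<open>x\<^sub>2\<close> never exceeds \<open>T\<close>. For the
  conditional densities at two points differing in the \<open>k\<close>-th coordinate the normalising
  constants cancel, and this sum becomes an increment \<open>G(t) - G(y\<^sub>k)\<close> of a difference \<open>G\<close> of
  logarithms of two forms of \<open>\<eta>\<close>, viewed as a function of the \<open>k\<close>-th coordinate. The
  derivative of \<open>G\<close> is a difference of two of the ratios whose oscillation is \<open>A - B\<close>, and a
  1-periodic function is \<open>L\<close>-Lipschitz for the torus distance exactly when its derivative is
  bounded by \<open>L\<close> in absolute value.\<close>

section \<open>Coordinate updates and partial derivatives\<close>

lemma upd_nth_same [simp]: "upd x j t $ j = t"
  by (simp add: upd_def)

lemma upd_nth_other [simp]: "l \<noteq> j \<Longrightarrow> upd x j t $ l = x $ l"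
  by (simp add: upd_def)

lemma upd_upd_same [simp]: "upd (upd x j s) j t = upd x j t"
  by (simp add: upd_def vec_eq_iff)

lemma upd_nth_self [simp]: "upd x j (x $ j) = x"
  by (simp add: upd_def vec_eq_iff)

lemma upd_commute: "j \<noteq> l \<Longrightarrow> upd (upd x j s) l t = upd (upd x l t) j s"
  by (simp add: upd_def vec_eq_iff)

lemma continuous_on_upd: "continuous_on S (upd y j)"
  unfolding upd_def
proof (intro continuous_on_vec_lambda)
  show "continuous_on S (\<lambda>t. if l = j then t else y $ l)" for l
    by (cases "l = j") (simp_all add: continuous_on_const)
qed

lemma sect_upd_same [simp]: "sect f (upd x j s) j = sect f x j"
  by (simp add: sect_def)

lemma DERIV_partial:
  assumes "\<forall>x. sect f x j differentiable at (x $ j)"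
  shows "DERIV (\<lambda>s. f (upd p j s)) s :> partial j f (upd p j s)"
proof -
  have "sect f (upd p j s) j differentiable at s"
    using assms[rule_format, of "upd p j s"] by simp
  then show ?thesis
    by (simp add: partial_def DERIV_deriv_iff_real_differentiable flip: sect_def)
qed

definition periodic_in :: "'n \<Rightarrow> (real^'n \<Rightarrow> real) \<Rightarrow> bool" where
  "periodic_in j g \<longleftrightarrow> (\<forall>p s. g (upd p j (s + 1)) = g (upd p j s))"

lemma periodicN_imp_periodic_in: "periodicN f \<Longrightarrow> periodic_in j f"
  unfolding periodic_in_def periodicN_def by (metis upd_nth_same upd_upd_same)

lemma periodic_in_partial_same:
  assumes "periodic_in j f" "\<forall>x. sect f x j differentiable at (x $ j)"
  shows "periodic_in j (partial j f)"
  unfolding periodic_in_def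
proof (intro allI)
  fix p s
  have "DERIV (\<lambda>s. f (upd p j (s + 1))) s :> partial j f (upd p j (s + 1))"
    by (rule DERIV_shift[THEN iffD1, OF DERIV_partial[OF assms(2)]])
  moreover have "(\<lambda>s. f (upd p j (s + 1))) = (\<lambda>s. f (upd p j s))"
    using assms(1) unfolding periodic_in_def by blast
  ultimately have "DERIV (\<lambda>s. f (upd p j s)) s :> partial j f (upd p j (s + 1))"
    by simp
  then show "partial j f (upd p j (s + 1)) = partial j f (upd p j s)"
    using DERIV_partial[OF assms(2)] DERIV_unique by blast
qed

lemma periodic_in_partial_other:
  assumes "periodic_in j f" "l \<noteq> j"
  shows "periodic_in j (partial l f)"
proof -
  have "sect f (upd p j (s + 1)) l = sect f (upd p j s) l" for p s
    using assms unfolding periodic_in_def sect_def by (simp add: upd_commute)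
  then show ?thesis
    unfolding periodic_in_def partial_def using assms(2) by simp
qed

section \<open>The cone \<open>V\<^sub>b\<close> and the projective metric \<open>\<theta>\<^sub>b\<close>\<close>

lemma C2_1_lincomb:
  assumes "C2_1 f" "C2_1 g"
  shows "C2_1 (\<lambda>x. s * f x + t * g x)"
    and "deriv (\<lambda>x. s * f x + t * g x) = (\<lambda>x. s * deriv f x + t * deriv g x)"
proof -
  have lincomb: "deriv (\<lambda>x. s * u x + t * v x) = (\<lambda>x. s * deriv u x + t * deriv v x)"
      "(\<lambda>x. s * u x + t * v x) differentiable at x"
    if "\<forall>x. u differentiable at x" "\<forall>x. v differentiable at x" for u v :: "real \<Rightarrow> real" and x
  proof -
    have "DERIV u x :> deriv u x" "DERIV v x :> deriv v x" for x
      using that by (simp_all add: DERIV_deriv_iff_real_differentiable)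
    then have "DERIV (\<lambda>x. s * u x + t * v x) x :> s * deriv u x + t * deriv v x" for x
      by (auto intro!: derivative_eq_intros)
    then show "deriv (\<lambda>x. s * u x + t * v x) = (\<lambda>x. s * deriv u x + t * deriv v x)"
        "(\<lambda>x. s * u x + t * v x) differentiable at x"
      by (auto simp: DERIV_imp_deriv real_differentiable_def)
  qed
  show "deriv (\<lambda>x. s * f x + t * g x) = (\<lambda>x. s * deriv f x + t * deriv g x)"
    using assms lincomb(1) unfolding C2_1_def by blast
  then show "C2_1 (\<lambda>x. s * f x + t * g x)"
    using assms unfolding C2_1_def by (simp add: lincomb continuous_on_add continuous_on_mult_left)
qed

lemma mem_V_iff: "\<psi> \<in> V b \<longleftrightarrow> C2_T_pos \<psi> \<and> (\<forall>x. \<bar>deriv \<psi> x\<bar> < b * \<psi> x)"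
proof -
  have "deriv (\<lambda>y. ln (\<psi> y)) x = deriv \<psi> x / \<psi> x" if "C2_T_pos \<psi>" for x
  proof -
    have "\<psi> x > 0" "DERIV \<psi> x :> deriv \<psi> x"
      using that by (auto simp: C2_T_pos_def C2_1_def DERIV_deriv_iff_real_differentiable)
    then show ?thesis
      by (intro DERIV_imp_deriv) (auto intro!: derivative_eq_intros simp: field_simps)
  qed
  moreover have "\<bar>deriv \<psi> x / \<psi> x\<bar> < b \<longleftrightarrow> \<bar>deriv \<psi> x\<bar> < b * \<psi> x" if "C2_T_pos \<psi>" for x
    using that by (simp add: C2_T_pos_def abs_divide pos_divide_less_eq abs_of_pos)
  ultimately show ?thesis
    unfolding V_def by auto
qed

lemma V_mono: "a \<le> b \<Longrightarrow> \<psi> \<in> V a \<Longrightarrow> \<psi> \<in> V b"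
  unfolding V_def using less_le_trans by blast

text \<open>Indices of the three forms \<open>u\<close>, \<open>b u - v\<close>, \<open>b u + v\<close> whose positivity at
  \<open>(\<psi>, \<psi>')\<close> defines \<open>V\<^sub>b\<close>.\<close>

datatype face = Val | Dminus | Dplus

lemma UNIV_face: "UNIV = {Val, Dminus, Dplus}"
  using face.exhaust by blast

instance face :: finite
  by standard (simp add: UNIV_face)

fun cone_form :: "real \<Rightarrow> face \<Rightarrow> real \<Rightarrow> real \<Rightarrow> real" where
  "cone_form b Val u v = u"
| "cone_form b Dminus u v = b * u - v"
| "cone_form b Dplus u v = b * u + v"

lemma cone_form_lincomb:
  "cone_form b f (s * u1 + t * u2) (s * v1 + t * v2) = s * cone_form b f u1 v1 + t * cone_form b f u2 v2"
  by (cases f) (simp_all add: algebra_simps)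

lemma all_face_iff: "(\<forall>f. P f) \<longleftrightarrow> P Val \<and> P Dminus \<and> P Dplus"
  by (metis face.exhaust)

lemma cone_form_pos_iff: "(\<forall>f. 0 < cone_form b f u v) \<longleftrightarrow> 0 < u \<and> \<bar>v\<bar> < b * u"
  by (auto simp: all_face_iff abs_less_iff)

lemma DERIV_cone_form:
  "DERIV u s :> u' \<Longrightarrow> DERIV v s :> v' \<Longrightarrow> DERIV (\<lambda>s. cone_form b f (u s) (v s)) s :> cone_form b f u' v'"
  by (cases f) (auto intro!: derivative_eq_intros)

lemma continuous_on_cone_form:
  "continuous_on S u \<Longrightarrow> continuous_on S v \<Longrightarrow> continuous_on S (\<lambda>x. cone_form b f (u x) (v x))"
  by (cases f) (auto intro!: continuous_intros)

definition face_val :: "real \<Rightarrow> face \<Rightarrow> (real \<Rightarrow> real) \<Rightarrow> real \<Rightarrow> real" where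
  "face_val b f \<psi> x = cone_form b f (\<psi> x) (deriv \<psi> x)"

lemma mem_V_iff_face_val: "\<psi> \<in> V b \<longleftrightarrow> C2_T_pos \<psi> \<and> (\<forall>f x. 0 < face_val b f \<psi> x)"
proof -
  have "(\<forall>f. 0 < face_val b f \<psi> x) \<longleftrightarrow> 0 < \<psi> x \<and> \<bar>deriv \<psi> x\<bar> < b * \<psi> x" for x
    unfolding face_val_def by (rule cone_form_pos_iff)
  then show ?thesis
    unfolding mem_V_iff C2_T_pos_def by blast
qed

lemma face_val_pos: "\<psi> \<in> V b \<Longrightarrow> 0 < face_val b f \<psi> x"
  using mem_V_iff_face_val by blast

lemma lincomb_in_V_iff:
  assumes "C2_T_pos \<psi>1" "C2_T_pos \<psi>2"
  shows "(\<lambda>x. s * \<psi>1 x + t * \<psi>2 x) \<in> V b \<longleftrightarrow>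
    (\<forall>f x. 0 < s * face_val b f \<psi>1 x + t * face_val b f \<psi>2 x)"
proof -
  have C2: "C2_1 \<psi>1" "C2_1 \<psi>2" and periodic: "periodic1 \<psi>1" "periodic1 \<psi>2"
    using assms by (auto simp: C2_T_pos_def)
  have face_val: "face_val b f (\<lambda>x. s * \<psi>1 x + t * \<psi>2 x) x = s * face_val b f \<psi>1 x + t * face_val b f \<psi>2 x"
    for f x by (simp add: face_val_def C2_1_lincomb(2)[OF C2] cone_form_lincomb)
  have "C2_T_pos (\<lambda>x. s * \<psi>1 x + t * \<psi>2 x) \<longleftrightarrow> (\<forall>x. 0 < s * \<psi>1 x + t * \<psi>2 x)"
    using C2_1_lincomb(1)[OF C2] periodic by (simp add: C2_T_pos_def periodic1_def)
  moreover have "face_val b Val \<psi> x = \<psi> x" for \<psi> x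
    by (simp add: face_val_def)
  ultimately show ?thesis
    unfolding mem_V_iff_face_val face_val by metis
qed

lemma V_cmult:
  assumes "\<psi> \<in> V a" "0 < c"
  shows "(\<lambda>x. c * \<psi> x) \<in> V a"
proof -
  have "C2_T_pos \<psi>"
    using assms(1) by (simp add: mem_V_iff)
  then show ?thesis
    using lincomb_in_V_iff[of \<psi> \<psi> c 0 a] assms by (simp add: face_val_pos)
qed

lemma diff_in_V_iff:
  assumes "\<psi>1 \<in> V b" "\<psi>2 \<in> V b"
  shows "(\<lambda>x. t * \<psi>1 x - \<psi>2 x) \<in> V b \<longleftrightarrow> (\<forall>f x. face_val b f \<psi>2 x < t * face_val b f \<psi>1 x)"
  using lincomb_in_V_iff[of \<psi>1 \<psi>2 t "-1" b] assms by (simp add: mem_V_iff)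

lemma face_val_ratio_le_beta:
  assumes "\<psi>1 \<in> V b" "\<psi>2 \<in> V b"
  shows "ereal (face_val b f \<psi>2 x / face_val b f \<psi>1 x) \<le> beta b \<psi>1 \<psi>2"
  unfolding beta_def
proof (rule Inf_greatest)
  fix e assume "e \<in> ereal ` {t. 0 < t \<and> (\<lambda>x. t * \<psi>1 x - \<psi>2 x) \<in> V b}"
  then obtain t where "e = ereal t" and "(\<lambda>x. t * \<psi>1 x - \<psi>2 x) \<in> V b"
    by auto
  then show "ereal (face_val b f \<psi>2 x / face_val b f \<psi>1 x) \<le> e"
    using assms diff_in_V_iff face_val_pos by (simp add: pos_divide_le_eq less_imp_le)
qed

lemma beta_le_iff:
  assumes "\<psi>1 \<in> V b" "\<psi>2 \<in> V b"
  shows "beta b \<psi>1 \<psi>2 \<le> ereal M \<longleftrightarrow> (\<forall>f x. face_val b f \<psi>2 x / face_val b f \<psi>1 x \<le> M)"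
proof
  assume "beta b \<psi>1 \<psi>2 \<le> ereal M"
  then show "\<forall>f x. face_val b f \<psi>2 x / face_val b f \<psi>1 x \<le> M"
    using face_val_ratio_le_beta[OF assms] by (meson ereal_less_eq(3) order_trans)
next
  assume bound: "\<forall>f x. face_val b f \<psi>2 x / face_val b f \<psi>1 x \<le> M"
  have "0 < M"
    using bound face_val_pos[OF assms(1)] face_val_pos[OF assms(2)] by (meson divide_pos_pos less_le_trans)
  show "beta b \<psi>1 \<psi>2 \<le> ereal M"
  proof (rule ereal_le_epsilon2)
    fix e :: real assume "0 < e"
    then have "face_val b f \<psi>2 x / face_val b f \<psi>1 x < M + e" for f x
      using bound[rule_format, of f x] by linarith
    then have "\<forall>f x. face_val b f \<psi>2 x < (M + e) * face_val b f \<psi>1 x"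
      using face_val_pos[OF assms(1)] by (simp add: pos_divide_less_eq)
    then have "M + e \<in> {t. 0 < t \<and> (\<lambda>x. t * \<psi>1 x - \<psi>2 x) \<in> V b}"
      using diff_in_V_iff[OF assms] \<open>0 < M\<close> \<open>0 < e\<close> by auto
    then have "beta b \<psi>1 \<psi>2 \<le> ereal (M + e)"
      unfolding beta_def by (intro Inf_lower) auto
    then show "beta b \<psi>1 \<psi>2 \<le> ereal M + ereal e"
      by simp
  qed
qed

lemma beta_eq_ereal:
  assumes "\<psi>1 \<in> V b" "\<psi>2 \<in> V b" "beta b \<psi>1 \<psi>2 \<noteq> \<infinity>"
  obtains u where "beta b \<psi>1 \<psi>2 = ereal u" "0 < u"
proof -
  have "ereal (face_val b Val \<psi>2 0 / face_val b Val \<psi>1 0) \<le> beta b \<psi>1 \<psi>2"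
    by (rule face_val_ratio_le_beta[OF assms(1,2)])
  moreover have "0 < face_val b Val \<psi>2 0 / face_val b Val \<psi>1 0"
    using face_val_pos assms by simp
  ultimately show ?thesis
    using that assms(3) by (cases "beta b \<psi>1 \<psi>2") auto
qed

lemma ln_ratios_le_theta:
  assumes V1: "\<psi>1 \<in> V b" and V2: "\<psi>2 \<in> V b" and theta: "theta b \<psi>1 \<psi>2 \<le> ereal T"
  shows "ln (face_val b f \<psi>2 x1 / face_val b f \<psi>1 x1) + ln (face_val b g \<psi>1 x2 / face_val b g \<psi>2 x2) \<le> T"
proof -
  have "beta b \<psi>1 \<psi>2 \<noteq> \<infinity>" "beta b \<psi>2 \<psi>1 \<noteq> \<infinity>"
    using theta by (auto simp: theta_def split: if_splits)
  then obtain u1 u2 where u: "beta b \<psi>1 \<psi>2 = ereal u1" "0 < u1" "beta b \<psi>2 \<psi>1 = ereal u2" "0 < u2"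
    using beta_eq_ereal V1 V2 by metis
  have "ln (face_val b f \<psi>2 x1 / face_val b f \<psi>1 x1) + ln (face_val b g \<psi>1 x2 / face_val b g \<psi>2 x2)
      \<le> ln u1 + ln u2"
    using beta_le_iff[OF V1 V2, of u1] beta_le_iff[OF V2 V1, of u2] u face_val_pos V1 V2
    by (intro add_mono) simp_all
  also have "\<dots> \<le> T"
    using theta by (simp add: theta_def u)
  finally show ?thesis .
qed

lemma theta_le_ln_of_ratio_products:
  assumes V1: "\<psi>1 \<in> V b" and V2: "\<psi>2 \<in> V b"
    and prod: "\<And>f g x1 x2. (face_val b f \<psi>2 x1 / face_val b f \<psi>1 x1) * (face_val b g \<psi>1 x2 / face_val b g \<psi>2 x2) \<le> E"
  shows "theta b \<psi>1 \<psi>2 \<le> ereal (ln E)"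
proof -
  define R where "R \<phi>1 \<phi>2 f x = face_val b f \<phi>2 x / face_val b f \<phi>1 x" for \<phi>1 \<phi>2 f x
  have R_pos: "0 < R \<psi>1 \<psi>2 f x" "0 < R \<psi>2 \<psi>1 f x" for f x
    unfolding R_def using face_val_pos V1 V2 by simp_all
  note beta_le = beta_le_iff[OF V1 V2, folded R_def] beta_le_iff[OF V2 V1, folded R_def]
  note prod = prod[folded R_def]
  have "beta b \<psi>1 \<psi>2 \<le> ereal (E / R \<psi>2 \<psi>1 Val 0)"
    using beta_le prod R_pos by (simp add: pos_le_divide_eq)
  then have "beta b \<psi>1 \<psi>2 \<noteq> \<infinity>"
    by auto
  then obtain u1 where u1: "beta b \<psi>1 \<psi>2 = ereal u1" "0 < u1"
    by (rule beta_eq_ereal[OF V1 V2])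
  have "R \<psi>2 \<psi>1 g x \<le> E / u1" for g x
  proof -
    have "u1 \<le> E / R \<psi>2 \<psi>1 g x"
      using beta_le(1)[of "E / R \<psi>2 \<psi>1 g x"] prod u1 R_pos by (simp add: pos_le_divide_eq)
    then show ?thesis
      using u1 R_pos by (simp add: pos_le_divide_eq mult.commute)
  qed
  then have beta21: "beta b \<psi>2 \<psi>1 \<le> ereal (E / u1)"
    using beta_le by simp
  then have "beta b \<psi>2 \<psi>1 \<noteq> \<infinity>"
    by auto
  then obtain u2 where u2: "beta b \<psi>2 \<psi>1 = ereal u2" "0 < u2"
    by (rule beta_eq_ereal[OF V2 V1])
  with beta21 have "u1 * u2 \<le> E"
    using u1 by (simp add: pos_le_divide_eq mult.commute)
  then have "ln (u1 * u2) \<le> ln E"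
    using u1 u2 by (metis ln_le_cancel_iff mult_pos_pos less_le_trans)
  then show ?thesis
    using u1 u2 by (simp add: theta_def ln_mult_pos)
qed

lemma theta_le_iff:
  assumes V1: "\<psi>1 \<in> V b" and V2: "\<psi>2 \<in> V b"
  shows "theta b \<psi>1 \<psi>2 \<le> ereal T \<longleftrightarrow>
    (\<forall>f g x1 x2. ln (face_val b f \<psi>2 x1 / face_val b f \<psi>1 x1)
                 + ln (face_val b g \<psi>1 x2 / face_val b g \<psi>2 x2) \<le> T)"
proof
  assume "theta b \<psi>1 \<psi>2 \<le> ereal T"
  then show "\<forall>f g x1 x2. ln (face_val b f \<psi>2 x1 / face_val b f \<psi>1 x1)
                 + ln (face_val b g \<psi>1 x2 / face_val b g \<psi>2 x2) \<le> T"
    using ln_ratios_le_theta[OF V1 V2] by blast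
next
  assume ln_bound: "\<forall>f g x1 x2. ln (face_val b f \<psi>2 x1 / face_val b f \<psi>1 x1)
                 + ln (face_val b g \<psi>1 x2 / face_val b g \<psi>2 x2) \<le> T"
  have "(face_val b f \<psi>2 x1 / face_val b f \<psi>1 x1) * (face_val b g \<psi>1 x2 / face_val b g \<psi>2 x2) \<le> exp T"
    for f g x1 x2
  proof -
    have pos: "0 < face_val b f \<psi>2 x1 / face_val b f \<psi>1 x1" "0 < face_val b g \<psi>1 x2 / face_val b g \<psi>2 x2"
      using face_val_pos V1 V2 by simp_all
    then have "ln ((face_val b f \<psi>2 x1 / face_val b f \<psi>1 x1) * (face_val b g \<psi>1 x2 / face_val b g \<psi>2 x2)) \<le> T"
      using ln_mult_pos[OF pos] ln_bound[rule_format, of f x1 g x2] by linarith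
    then show ?thesis
      using pos by (metis exp_le_cancel_iff exp_ln mult_pos_pos)
  qed
  then show "theta b \<psi>1 \<psi>2 \<le> ereal T"
    using theta_le_ln_of_ratio_products[OF V1 V2] by (metis ln_exp)
qed

section \<open>Periodic functions with bounded derivative\<close>

lemma DERIV_abs_le_of_increments:
  fixes g :: "real \<Rightarrow> real"
  assumes "DERIV g x :> D" and "0 < \<delta>"
    and increments: "\<And>h. 0 < h \<Longrightarrow> h < \<delta> \<Longrightarrow> \<bar>g (x + h) - g x\<bar> \<le> L * h"
  shows "\<bar>D\<bar> \<le> L"
proof -
  have "((\<lambda>h. (g (x + h) - g x) / h) \<longlongrightarrow> D) (at 0)"
    using assms(1) by (simp add: DERIV_def)
  then have "((\<lambda>h. (g (x + h) - g x) / h) \<longlongrightarrow> D) (at_right 0)"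
    by (rule tendsto_mono[OF at_le, rotated]) simp
  then have "((\<lambda>h. \<bar>(g (x + h) - g x) / h\<bar>) \<longlongrightarrow> \<bar>D\<bar>) (at_right 0)"
    by (rule tendsto_rabs)
  moreover have "eventually (\<lambda>h. \<bar>(g (x + h) - g x) / h\<bar> \<le> L) (at_right 0)"
    using eventually_at_right_real[OF \<open>0 < \<delta>\<close>]
  proof eventually_elim
    case (elim h)
    then show ?case
      using increments[of h] by (simp add: abs_divide pos_divide_le_eq)
  qed
  ultimately show ?thesis
    by (rule tendsto_upperbound) (simp add: trivial_limit_at_right_real)
qed

lemma torus_dist_eq_abs: "\<bar>u - v\<bar> < 1/2 \<Longrightarrow> torus_dist u v = \<bar>u - v\<bar>"
proof -
  assume "\<bar>u - v\<bar> < 1/2"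
  then have "- 1/2 < u - v" "u - v < 1/2"
    by linarith+
  then have "round (u - v) = 0"
    by (simp add: round_def floor_eq_iff)
  then show ?thesis
    by (simp add: torus_dist_def)
qed

lemma periodic_continuous_bounded:
  fixes g :: "real \<Rightarrow> real"
  assumes "continuous_on UNIV g" and periodic: "\<And>x. g (x + 1) = g x"
  obtains M where "\<And>x. \<bar>g x\<bar> \<le> M"
proof -
  interpret periodic_fun_simple' g
    by standard (rule periodic)
  have "compact (g ` {0..1})"
    by (rule compact_continuous_image[OF continuous_on_subset[OF assms(1)]]) auto
  then obtain M where M: "\<forall>z\<in>g ` {0..1}. \<bar>z\<bar> \<le> M"
    by (metis bounded_iff compact_imp_bounded real_norm_def)
  have "\<bar>g x\<bar> \<le> M" for x
  proof -
    have "g x = g (frac x)"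
      using plus_of_int[of "frac x" "\<lfloor>x\<rfloor>"] by (simp add: frac_def)
    then show ?thesis
      using M frac_ge_0[of x] frac_lt_1[of x] by auto
  qed
  then show ?thesis
    using that by blast
qed

lemma lipschitz_torus_iff_deriv_bound:
  fixes G G' :: "real \<Rightarrow> real"
  assumes G': "\<And>s. DERIV G s :> G' s" and periodic: "\<And>s. G (s + 1) = G s"
  shows "(\<forall>u t. \<bar>G t - G u\<bar> \<le> L * torus_dist u t) \<longleftrightarrow> (\<forall>s. \<bar>G' s\<bar> \<le> L)"
proof
  assume lipschitz: "\<forall>u t. \<bar>G t - G u\<bar> \<le> L * torus_dist u t"
  show "\<forall>s. \<bar>G' s\<bar> \<le> L"
  proof
    fix s
    have increments: "\<bar>G (s + h) - G s\<bar> \<le> L * h" if "0 < h" "h < 1/2" for h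
      using lipschitz[rule_format, of s "s + h"] that by (simp add: torus_dist_eq_abs)
    show "\<bar>G' s\<bar> \<le> L"
      by (rule DERIV_abs_le_of_increments[where \<delta>="1/2", OF G' _ increments]) simp_all
  qed
next
  assume bound: "\<forall>s. \<bar>G' s\<bar> \<le> L"
  show "\<forall>u t. \<bar>G t - G u\<bar> \<le> L * torus_dist u t"
  proof (intro allI)
    fix u t :: real
    interpret periodic_fun_simple' G
      by standard (rule periodic)
    \<comment> \<open>the representative of \<open>t\<close> modulo 1 nearest to \<open>u\<close>\<close>
    define t' where "t' = t + of_int (round (u - t))"
    have "G t = G t'"
      unfolding t'_def by (rule plus_of_int[symmetric])
    moreover have "norm (G t' - G u) \<le> L * norm (t' - u)"
    proof (rule field_differentiable_bound[OF convex_UNIV])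
      show "(G has_field_derivative G' z) (at z within UNIV)" for z
        using G' by simp
      show "norm (G' z) \<le> L" for z
        using bound by simp
    qed simp_all
    moreover have "torus_dist u t = \<bar>t' - u\<bar>"
      unfolding torus_dist_def t'_def by (simp add: abs_minus_commute)
    ultimately show "\<bar>G t - G u\<bar> \<le> L * torus_dist u t"
      by (simp only: real_norm_def)
  qed
qed

section \<open>Conditional densities along a coordinate\<close>

lemma integral_sect_pos:
  assumes "C2_TN_pos \<eta>"
  shows "0 < integral {0..1} (\<lambda>s. \<eta> (upd y i s))"
proof -
  have cont: "continuous_on {0..1} (\<lambda>s. \<eta> (upd y i s))"
    using assms unfolding C2_TN_pos_def C2_N_def
    by (intro continuous_on_compose2[OF _ continuous_on_upd]) auto
  obtain s0 where s0: "\<forall>s\<in>{0..1}. \<eta> (upd y i s0) \<le> \<eta> (upd y i s)"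
    using continuous_attains_inf[OF compact_Icc _ cont] by auto
  have "integral {0..1} (\<lambda>s::real. \<eta> (upd y i s0)) \<le> integral {0..1} (\<lambda>s. \<eta> (upd y i s))"
    using s0 integrable_continuous_interval[OF cont] by (intro integral_le) auto
  moreover have "0 < \<eta> (upd y i s0)"
    using assms unfolding C2_TN_pos_def by auto
  ultimately show ?thesis
    by simp
qed

lemma cond_density_in_V_iff:
  assumes "C2_TN_pos \<eta>"
  shows "cond_density \<eta> i y \<in> V a \<longleftrightarrow> sect \<eta> y i \<in> V a"
proof -
  define c where "c = integral {0..1} (\<lambda>s. \<eta> (upd y i s))"
  have "0 < c"
    unfolding c_def by (rule integral_sect_pos[OF assms])
  then have "cond_density \<eta> i y = (\<lambda>x. inverse c * sect \<eta> y i x)"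
    and "sect \<eta> y i = (\<lambda>x. c * cond_density \<eta> i y x)"
    by (auto simp: cond_density_def sect_def c_def fun_eq_iff field_simps)
  then show ?thesis
    using V_cmult \<open>0 < c\<close> by (metis inverse_positive_iff_positive)
qed

locale fibred_density =
  fixes \<eta> :: "real^'n \<Rightarrow> real" and i k :: 'n and b :: real
  assumes eta: "C2_TN_pos \<eta>" and k_ne_i: "k \<noteq> i" and sect_in_V: "\<And>y. sect \<eta> y i \<in> V b"
begin

lemma C2_N_eta: "C2_N \<eta>"
  using eta by (simp add: C2_TN_pos_def)

lemma periodic_in_eta: "periodic_in j \<eta>"
  using eta by (simp add: C2_TN_pos_def periodicN_imp_periodic_in)

definition face_eta :: "face \<Rightarrow> real^'n \<Rightarrow> real" where
  "face_eta f p = cone_form b f (\<eta> p) (partial i \<eta> p)"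

definition face_ratio :: "face \<Rightarrow> real^'n \<Rightarrow> real" where
  "face_ratio f p = cone_form b f (partial k \<eta> p) (partial k (partial i \<eta>) p) / face_eta f p"

text \<open>As a function of the \<open>k\<close>-th coordinate \<open>s\<close>, the increments of \<open>log_gap\<close> are the
  logarithmic ratios bounded in \<open>\<theta>\<^sub>b\<close>, and its derivative is a difference of two of the
  ratios entering \<open>A - B\<close>.\<close>

definition log_gap :: "face \<Rightarrow> real \<Rightarrow> face \<Rightarrow> real \<Rightarrow> real^'n \<Rightarrow> real \<Rightarrow> real" where
  "log_gap f x1 g x2 p s =
     ln (face_eta f (upd (upd p i x1) k s)) - ln (face_eta g (upd (upd p i x2) k s))"

lemma face_eta_pos: "0 < face_eta f p"
proof -
  have "face_eta f p = face_val b f (sect \<eta> p i) (p $ i)"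
    by (simp add: face_eta_def face_val_def partial_def sect_def)
  then show ?thesis
    using face_val_pos[OF sect_in_V] by simp
qed

lemma cond_density_in_V: "cond_density \<eta> i y \<in> V b"
  using cond_density_in_V_iff[OF eta] sect_in_V by blast

lemma face_val_cond_density:
  "face_val b f (cond_density \<eta> i y) x = face_eta f (upd y i x) / integral {0..1} (\<lambda>s. \<eta> (upd y i s))"
proof -
  define c where "c = integral {0..1} (\<lambda>s. \<eta> (upd y i s))"
  have "DERIV (\<lambda>x. \<eta> (upd y i x) / c) x :> partial i \<eta> (upd y i x) / c"
    using C2_N_eta by (intro DERIV_cdivide DERIV_partial) (simp add: C2_N_def)
  then have "deriv (cond_density \<eta> i y) x = partial i \<eta> (upd y i x) / c"
    unfolding cond_density_def c_def[symmetric] by (rule DERIV_imp_deriv)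
  then show ?thesis
    using cone_form_lincomb[of b f "1 / c" _ 0 _ _ 0]
    by (simp add: face_val_def face_eta_def cond_density_def c_def[symmetric])
qed

lemma set_ratios: "set (ratios i k b \<eta> p) = range (\<lambda>f. face_ratio f p)"
  by (auto simp: ratios_def face_ratio_def face_eta_def UNIV_face)

lemma DERIV_log_gap:
  "DERIV (log_gap f x1 g x2 p) s :>
     face_ratio f (upd (upd p k s) i x1) - face_ratio g (upd (upd p k s) i x2)"
proof -
  have "DERIV (\<lambda>s. face_eta f (upd q k s)) s :>
      cone_form b f (partial k \<eta> (upd q k s)) (partial k (partial i \<eta>) (upd q k s))" for f q
    unfolding face_eta_def using C2_N_eta
    by (intro DERIV_cone_form DERIV_partial) (simp_all add: C2_N_def)
  then show ?thesis
    unfolding log_gap_def face_ratio_def using face_eta_pos k_ne_i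
    by (auto intro!: derivative_eq_intros simp: upd_commute divide_inverse mult.commute)
qed

lemma log_gap_periodic: "log_gap f x1 g x2 p (s + 1) = log_gap f x1 g x2 p s"
proof -
  have "periodic_in k (partial i \<eta>)"
    using periodic_in_eta k_ne_i by (simp add: periodic_in_partial_other)
  then show ?thesis
    using periodic_in_eta by (simp add: log_gap_def face_eta_def periodic_in_def)
qed

lemma log_gap_upd: "log_gap f x1 g x2 (upd p k u) = log_gap f x1 g x2 p"
  using k_ne_i by (simp add: log_gap_def upd_commute fun_eq_iff)

lemma ln_face_val_ratios_eq_log_gap:
  "ln (face_val b f (cond_density \<eta> i (upd y k t)) x1 / face_val b f (cond_density \<eta> i y) x1)
     + ln (face_val b g (cond_density \<eta> i y) x2 / face_val b g (cond_density \<eta> i (upd y k t)) x2)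
   = log_gap f x1 g x2 y t - log_gap f x1 g x2 y (y $ k)"
proof -
  define c0 where "c0 = integral {0..1} (\<lambda>s. \<eta> (upd y i s))"
  define c1 where "c1 = integral {0..1} (\<lambda>s. \<eta> (upd (upd y k t) i s))"
  have c_pos: "0 < c0" "0 < c1"
    unfolding c0_def c1_def by (simp_all add: integral_sect_pos[OF eta])
  have "upd (upd y k t) i x = upd (upd y i x) k t" for x
    using k_ne_i by (simp add: upd_commute)
  moreover have "upd (upd y i x) k (y $ k) = upd y i x" for x
    using upd_nth_self[of "upd y i x" k] k_ne_i by simp
  ultimately have faces:
    "face_val b h (cond_density \<eta> i (upd y k t)) x = face_eta h (upd (upd y i x) k t) / c1"
    "face_val b h (cond_density \<eta> i y) x = face_eta h (upd (upd y i x) k (y $ k)) / c0" for h x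
    by (simp_all add: face_val_cond_density c0_def c1_def)
  have "ln ((A / c1) / (B / c0)) + ln ((D / c0) / (F / c1)) = (ln A - ln F) - (ln B - ln D)"
    if "0 < A" "0 < B" "0 < D" "0 < F" for A B D F
    using that c_pos by (simp add: ln_div ln_mult_pos)
  then show ?thesis
    unfolding faces log_gap_def using face_eta_pos by simp
qed

lemma face_ratio_bounded:
  obtains M where "\<And>f x. \<bar>face_ratio f (upd y i x)\<bar> \<le> M"
proof -
  have along_fibre: "continuous_on UNIV (\<lambda>x. q (upd y i x))"
    if "continuous_on UNIV q" for q :: "real^'n \<Rightarrow> real"
    using continuous_on_compose2[OF that continuous_on_upd] by simp
  have periodic: "periodic_in i \<eta>" "periodic_in i (partial i \<eta>)"
      "periodic_in i (partial k \<eta>)" "periodic_in i (partial k (partial i \<eta>))"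
    using periodic_in_eta C2_N_eta k_ne_i
    by (simp_all add: periodic_in_partial_same periodic_in_partial_other C2_N_def)
  have continuous: "continuous_on UNIV \<eta>" "continuous_on UNIV (partial i \<eta>)"
      "continuous_on UNIV (partial k \<eta>)" "continuous_on UNIV (partial k (partial i \<eta>))"
    using C2_N_eta by (simp_all add: C2_N_def)
  define h where "h x = (\<Sum>f\<in>UNIV. \<bar>face_ratio f (upd y i x)\<bar>)" for x
  have "continuous_on UNIV h"
    unfolding h_def face_ratio_def face_eta_def using face_eta_pos
    by (intro continuous_on_sum continuous_on_rabs continuous_on_divide continuous_on_cone_form
        along_fibre continuous) (simp add: face_eta_def less_imp_neq[symmetric])
  moreover have "h (x + 1) = h x" for x
    using periodic unfolding h_def face_ratio_def face_eta_def periodic_in_def by simp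
  ultimately obtain M where M: "\<bar>h x\<bar> \<le> M" for x
    using periodic_continuous_bounded by blast
  have "\<bar>face_ratio f (upd y i x)\<bar> \<le> h x" for f x
    unfolding h_def by (rule member_le_sum) simp_all
  then show ?thesis
    using that M by (meson abs_ge_self order_trans)
qed

lemma Max_ratios_eq: "\<exists>f. Max (set (ratios i k b \<eta> p)) = face_ratio f p"
proof -
  have "Max (range (\<lambda>f. face_ratio f p)) \<in> range (\<lambda>f. face_ratio f p)"
    by (rule Max_in) simp_all
  then show ?thesis
    unfolding set_ratios image_iff by blast
qed

lemma Min_ratios_eq: "\<exists>f. Min (set (ratios i k b \<eta> p)) = face_ratio f p"
proof -
  have "Min (range (\<lambda>f. face_ratio f p)) \<in> range (\<lambda>f. face_ratio f p)"
    by (rule Min_in) simp_all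
  then show ?thesis
    unfolding set_ratios image_iff by blast
qed

lemma face_ratio_le_A_fun: "face_ratio f (upd y i x) \<le> A_fun i k \<eta> b y"
proof -
  obtain M where M: "\<And>f x. \<bar>face_ratio f (upd y i x)\<bar> \<le> M"
    using face_ratio_bounded[of y] by blast
  have "Max (set (ratios i k b \<eta> (upd y i x))) \<le> M" for x
    using Max_ratios_eq[of "upd y i x"] M by (metis abs_le_iff)
  then have bdd: "bdd_above (range (\<lambda>x. Max (set (ratios i k b \<eta> (upd y i x)))))"
    by (rule bdd_aboveI2)
  have "face_ratio f (upd y i x) \<le> Max (set (ratios i k b \<eta> (upd y i x)))"
    by (simp add: set_ratios)
  also have "\<dots> \<le> A_fun i k \<eta> b y"
    unfolding A_fun_def by (rule cSUP_upper[OF UNIV_I bdd])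
  finally show ?thesis .
qed

lemma B_fun_le_face_ratio: "B_fun i k \<eta> b y \<le> face_ratio f (upd y i x)"
proof -
  obtain M where M: "\<And>f x. \<bar>face_ratio f (upd y i x)\<bar> \<le> M"
    using face_ratio_bounded[of y] by blast
  have "- M \<le> Min (set (ratios i k b \<eta> (upd y i x)))" for x
    using Min_ratios_eq[of "upd y i x"] M by (metis abs_le_iff minus_le_iff)
  then have bdd: "bdd_below (range (\<lambda>x. Min (set (ratios i k b \<eta> (upd y i x)))))"
    by (rule bdd_belowI2)
  have "B_fun i k \<eta> b y \<le> Min (set (ratios i k b \<eta> (upd y i x)))"
    unfolding B_fun_def by (rule cINF_lower[OF bdd UNIV_I])
  also have "\<dots> \<le> face_ratio f (upd y i x)"
    by (simp add: set_ratios)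
  finally show ?thesis .
qed

lemma A_minus_B_le_iff:
  "A_fun i k \<eta> b y - B_fun i k \<eta> b y \<le> L \<longleftrightarrow>
     (\<forall>f x1 g x2. face_ratio f (upd y i x1) - face_ratio g (upd y i x2) \<le> L)"
proof
  assume "A_fun i k \<eta> b y - B_fun i k \<eta> b y \<le> L"
  moreover have "face_ratio f (upd y i x1) - face_ratio g (upd y i x2)
      \<le> A_fun i k \<eta> b y - B_fun i k \<eta> b y" for f x1 g x2
    by (intro diff_mono face_ratio_le_A_fun B_fun_le_face_ratio)
  ultimately show "\<forall>f x1 g x2. face_ratio f (upd y i x1) - face_ratio g (upd y i x2) \<le> L"
    by (meson order_trans)
next
  assume oscillation: "\<forall>f x1 g x2. face_ratio f (upd y i x1) - face_ratio g (upd y i x2) \<le> L"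
  have "Max (set (ratios i k b \<eta> (upd y i x1))) - L \<le> Min (set (ratios i k b \<eta> (upd y i x2)))"
    for x1 x2
    using Max_ratios_eq[of "upd y i x1"] Min_ratios_eq[of "upd y i x2"] oscillation
    by (metis diff_le_eq add.commute)
  then have "Max (set (ratios i k b \<eta> (upd y i x1))) - L \<le> B_fun i k \<eta> b y" for x1
    unfolding B_fun_def by (intro cINF_greatest) simp_all
  then have "A_fun i k \<eta> b y \<le> L + B_fun i k \<eta> b y"
    unfolding A_fun_def by (intro cSUP_least) (simp_all add: algebra_simps)
  then show "A_fun i k \<eta> b y - B_fun i k \<eta> b y \<le> L"
    by simp
qed

lemma theta_le_iff_log_gap:
  "theta b (cond_density \<eta> i y) (cond_density \<eta> i (upd y k t)) \<le> ereal T \<longleftrightarrow>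
     (\<forall>f x1 g x2. log_gap f x1 g x2 y t - log_gap f x1 g x2 y (y $ k) \<le> T)"
  by (auto simp: theta_le_iff[OF cond_density_in_V cond_density_in_V] ln_face_val_ratios_eq_log_gap)

lemma theta_bound_iff_log_gap_lipschitz:
  "(\<forall>y t. theta b (cond_density \<eta> i y) (cond_density \<eta> i (upd y k t)) \<le> ereal (L * torus_dist (y $ k) t))
   \<longleftrightarrow> (\<forall>f x1 g x2 p u t. \<bar>log_gap f x1 g x2 p t - log_gap f x1 g x2 p u\<bar> \<le> L * torus_dist u t)"
proof
  assume theta: "\<forall>y t. theta b (cond_density \<eta> i y) (cond_density \<eta> i (upd y k t)) \<le> ereal (L * torus_dist (y $ k) t)"
  have "log_gap f x1 g x2 p t - log_gap f x1 g x2 p u \<le> L * torus_dist u t" for f x1 g x2 p u t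
    using theta_le_iff_log_gap[of "upd p k u" t "L * torus_dist u t", THEN iffD1]
      theta[rule_format, of "upd p k u" t]
    by (simp add: log_gap_upd)
  moreover have "log_gap g x2 f x1 p t - log_gap g x2 f x1 p u
      = - (log_gap f x1 g x2 p t - log_gap f x1 g x2 p u)" for f x1 g x2 p u t
    by (simp add: log_gap_def)
  ultimately show "\<forall>f x1 g x2 p u t. \<bar>log_gap f x1 g x2 p t - log_gap f x1 g x2 p u\<bar> \<le> L * torus_dist u t"
    by (metis abs_le_iff minus_le_iff)
next
  assume "\<forall>f x1 g x2 p u t. \<bar>log_gap f x1 g x2 p t - log_gap f x1 g x2 p u\<bar> \<le> L * torus_dist u t"
  then show "\<forall>y t. theta b (cond_density \<eta> i y) (cond_density \<eta> i (upd y k t)) \<le> ereal (L * torus_dist (y $ k) t)"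
    by (simp add: theta_le_iff_log_gap abs_le_iff)
qed

lemma log_gap_lipschitz_iff:
  "(\<forall>u t. \<bar>log_gap f x1 g x2 p t - log_gap f x1 g x2 p u\<bar> \<le> L * torus_dist u t) \<longleftrightarrow>
     (\<forall>s. \<bar>face_ratio f (upd (upd p k s) i x1) - face_ratio g (upd (upd p k s) i x2)\<bar> \<le> L)"
  by (rule lipschitz_torus_iff_deriv_bound[OF DERIV_log_gap log_gap_periodic])

lemma theta_bound_iff_A_minus_B:
  "(\<forall>y t. theta b (cond_density \<eta> i y) (cond_density \<eta> i (upd y k t)) \<le> ereal (L * torus_dist (y $ k) t))
   \<longleftrightarrow> (\<forall>y. A_fun i k \<eta> b y - B_fun i k \<eta> b y \<le> L)"
proof -
  have swap: "face_ratio g q2 - face_ratio f q1 = - (face_ratio f q1 - face_ratio g q2)" for f g q1 q2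
    by simp
  have "(\<forall>y t. theta b (cond_density \<eta> i y) (cond_density \<eta> i (upd y k t)) \<le> ereal (L * torus_dist (y $ k) t))
     \<longleftrightarrow> (\<forall>f x1 g x2 p s. \<bar>face_ratio f (upd (upd p k s) i x1) - face_ratio g (upd (upd p k s) i x2)\<bar> \<le> L)"
    by (simp add: theta_bound_iff_log_gap_lipschitz log_gap_lipschitz_iff)
  also have "\<dots> \<longleftrightarrow> (\<forall>y f x1 g x2. face_ratio f (upd y i x1) - face_ratio g (upd y i x2) \<le> L)"
  proof
    assume "\<forall>f x1 g x2 p s. \<bar>face_ratio f (upd (upd p k s) i x1) - face_ratio g (upd (upd p k s) i x2)\<bar> \<le> L"
    then show "\<forall>y f x1 g x2. face_ratio f (upd y i x1) - face_ratio g (upd y i x2) \<le> L"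
      by (metis abs_le_iff upd_nth_self)
  next
    assume "\<forall>y f x1 g x2. face_ratio f (upd y i x1) - face_ratio g (upd y i x2) \<le> L"
    then show "\<forall>f x1 g x2 p s. \<bar>face_ratio f (upd (upd p k s) i x1) - face_ratio g (upd (upd p k s) i x2)\<bar> \<le> L"
      by (metis abs_le_iff minus_le_iff swap)
  qed
  also have "\<dots> \<longleftrightarrow> (\<forall>y. A_fun i k \<eta> b y - B_fun i k \<eta> b y \<le> L)"
    by (simp add: A_minus_B_le_iff)
  finally show ?thesis .
qed

end

theorem propositionC1:
  fixes \<eta> :: "real^'n \<Rightarrow> real" and a b L :: real and i k :: 'n
  assumes "C2_TN_pos \<eta>" and "0 \<le> a" and "a \<le> b" and "0 \<le> L" and "k \<noteq> i"
  shows "in_M i k a b L \<eta> \<longleftrightarrow>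
           (\<forall>y. sect \<eta> y i \<in> V a) \<and>
           (\<forall>y. A_fun i k \<eta> b y - B_fun i k \<eta> b y \<le> L)"
proof (cases "\<forall>y. sect \<eta> y i \<in> V a")
  case True
  then interpret fibred_density \<eta> i k b
    using assms V_mono by unfold_locales auto
  show ?thesis
    using assms(1) True cond_density_in_V_iff[OF assms(1)] theta_bound_iff_A_minus_B
    by (simp add: in_M_def)
next
  case False
  then show ?thesis
    using cond_density_in_V_iff[OF assms(1)] by (auto simp: in_M_def)
qed

end
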